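(* Let $p$ be an odd prime and fix $\alpha\in(0,\alpha_* )$, where $\alpha_*=(p-1)/p$. There is a constant $C_{p,\alpha}<\infty$ such that, for all sufficiently large $r$, the hitting time $\tau_\alpha=\inf\{t:S_t\ge\alpha r\}$ satisfies \[ \sup_{1\le s\le r}\mathbb E_s\tau_\alpha\le C_{p,\alpha}r\log r. \] Consequently, for a suitable $B_{p,\alpha}<\infty$, $\sup_{1\le s\le r}\mathbb P_s(\tau_\alpha>B_{p,\alpha}r\log r)\le\frac12$.
   Context: Let $(Y_t)$ be the one-column $p$-ary transvection walk on $\mathbb F_p^r\setminus\{0\}$: at each step choose an ordered pair of distinct $i,j\in[r]$ and $a\in\mathbb F_p$ uniformly at random and replace $Y_i$ by $Y_i+aY_j$. Let $S_t=|\{i:Y_t(i)\ne0\}|$; this is a birth–death chain on $\{1,\dots,r\}$ with birth probability $B_s=\frac{p-1}{p}\frac{s(r-s)}{r(r-1)}$ and death probability $D_s=\frac1p\frac{s(s-1)}{r(r-1)}$ from state $s$. $\mathbb E_s,\mathbb P_s$ refer to this chain started at $S_0=s$. *)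

theory Defs
  imports "HOL-Probability.Probability"
begin

definition birth :: "nat \<Rightarrow> nat \<Rightarrow> nat \<Rightarrow> real" where
  "birth p r s = ((real p - 1) / real p) * (real s * (real r - real s)) / (real r * (real r - 1))"

definition death :: "nat \<Rightarrow> nat \<Rightarrow> nat \<Rightarrow> real" where
  "death p r s = (1 / real p) * (real s * (real s - 1)) / (real r * (real r - 1))"

text \<open>One step of the birth-death chain: s+1 w.p. birth, s-1 w.p. death, stay otherwise.\<close>

definition step_pmf :: "nat \<Rightarrow> nat \<Rightarrow> nat \<Rightarrow> nat pmf" where
  "step_pmf p r s =
     bind_pmf (bernoulli_pmf (birth p r s)) (\<lambda>b.
       if b then return_pmf (s + 1)
       else bind_pmf (bernoulli_pmf (death p r s / (1 - birth p r s))) (\<lambda>d.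
         if d then return_pmf (s - 1) else return_pmf s))"

definition stopped_step :: "nat \<Rightarrow> nat \<Rightarrow> real \<Rightarrow> nat \<Rightarrow> nat pmf" where
  "stopped_step p r \<alpha> s = (if real s \<ge> \<alpha> * real r then return_pmf s else step_pmf p r s)"

fun stopped_dist :: "nat \<Rightarrow> nat \<Rightarrow> real \<Rightarrow> nat \<Rightarrow> nat \<Rightarrow> nat pmf" where
  "stopped_dist p r \<alpha> s 0 = return_pmf s"
| "stopped_dist p r \<alpha> s (Suc t) = bind_pmf (stopped_dist p r \<alpha> s t) (stopped_step p r \<alpha>)"

text \<open>P_s(\<tau>_\<alpha> > t), where \<tau>_\<alpha> = inf{t. S_t \<ge> \<alpha> r}.\<close>

definition tail_prob :: "nat \<Rightarrow> nat \<Rightarrow> real \<Rightarrow> nat \<Rightarrow> nat \<Rightarrow> real" where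
  "tail_prob p r \<alpha> s t = measure_pmf.prob (stopped_dist p r \<alpha> s t) {x. real x < \<alpha> * real r}"

text \<open>E_s \<tau>_\<alpha> = sum over t of P_s(\<tau>_\<alpha> > t), in ennreal (possibly infinite).\<close>

definition exp_hit :: "nat \<Rightarrow> nat \<Rightarrow> real \<Rightarrow> nat \<Rightarrow> ennreal" where
  "exp_hit p r \<alpha> s = (\<Sum>t. ennreal (tail_prob p r \<alpha> s t))"

end

theory Submission
  imports Defs "HOL-Analysis.Harmonic_Numbers"
begin

text \<open>The harmonic potential F x = H_(x-1) is a Lyapunov function for the support-size chain: it
  rises by 1/x at a birth and falls by 1/(x-1) at a death, which turns the quadratic rates B_x and
  D_x into the linear expected increment ((p-1) r - p x) / (p r (r-1)), at least c / (p r) with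
  c = p - 1 - p \<alpha> > 0 while x < \<alpha> r. Since 0 \<le> F \<le> H_r \<le> 2 ln r, summing this drift
  over time bounds E \<tau> = \<Sum>_t P(\<tau> > t) by H_r p r / c = O(r log r). As the stopped chain is
  absorbed above \<alpha> r, P(\<tau> > t) decreases in t, so (T + 1) P(\<tau> > T) \<le> E \<tau>, which gives
  the tail bound at T = 2 C r log r.\<close>

lemma integrable_measure_pmf_bounded:
  fixes f :: "'a \<Rightarrow> real"
  assumes "\<And>x. \<bar>f x\<bar> \<le> B"
  shows "integrable (measure_pmf M) f"
  by (rule measure_pmf.integrable_const_bound[where B = B]) (use assms in auto)

lemma expectation_pmf_le_bound:
  fixes f :: "'a \<Rightarrow> real"
  assumes "\<And>x. f x \<le> B" and "\<And>x. \<bar>f x\<bar> \<le> B'"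
  shows "measure_pmf.expectation M f \<le> B"
  using integral_mono[OF integrable_measure_pmf_bounded[OF assms(2)] _ assms(1), of M]
  by simp

lemma expectation_bind_pmf_bounded:
  fixes f :: "'b \<Rightarrow> real"
  assumes "\<And>y. \<bar>f y\<bar> \<le> B"
  shows "measure_pmf.expectation (M \<bind> N) f
    = measure_pmf.expectation M (\<lambda>x. measure_pmf.expectation (N x) f)"
  unfolding measure_pmf_bind
  by (rule integral_bind[where K = "count_space UNIV" and B = B and B' = 1])
     (use assms in \<open>auto simp: space_subprob_algebra subprob_space_measure_pmf\<close>)

lemma abs_expectation_pmf_le_bound:
  fixes f :: "'a \<Rightarrow> real"
  assumes "\<And>x. \<bar>f x\<bar> \<le> B"
  shows "\<bar>measure_pmf.expectation M f\<bar> \<le> B"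
proof -
  have "\<bar>measure_pmf.expectation M f\<bar> \<le> measure_pmf.expectation M (\<lambda>x. \<bar>f x\<bar>)"
    by (rule integral_abs_bound)
  also have "\<dots> \<le> B"
    by (rule expectation_pmf_le_bound[where B' = B]) (use assms in auto)
  finally show ?thesis .
qed

lemma additive_drift:
  fixes D :: "nat \<Rightarrow> 'a pmf" and K :: "'a \<Rightarrow> 'a pmf" and F :: "'a \<Rightarrow> real"
  assumes D_Suc: "\<And>t. D (Suc t) = D t \<bind> K"
    and F_bounded: "\<And>x. \<bar>F x\<bar> \<le> M"
    and drift: "\<And>t x. x \<in> set_pmf (D t) \<Longrightarrow>
      F x + d * indicator A x \<le> measure_pmf.expectation (K x) F"
    and d_nonneg: "0 \<le> d"
  shows "measure_pmf.expectation (D 0) F + d * (\<Sum>t<T. measure_pmf.prob (D t) A)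
    \<le> measure_pmf.expectation (D T) F"
proof (induction T)
  case 0
  then show ?case by simp
next
  case (Suc T)
  have ind_bounded: "\<bar>d * indicator A x\<bar> \<le> d" for x
    using d_nonneg by (simp add: indicator_def)
  have "measure_pmf.expectation (D T) (\<lambda>x. F x + d * indicator A x)
      = measure_pmf.expectation (D T) F + measure_pmf.expectation (D T) (\<lambda>x. d * indicator A x)"
    by (intro Bochner_Integration.integral_add integrable_measure_pmf_bounded[OF F_bounded]
        integrable_measure_pmf_bounded[OF ind_bounded])
  then have "measure_pmf.expectation (D T) F + d * measure_pmf.prob (D T) A
      = measure_pmf.expectation (D T) (\<lambda>x. F x + d * indicator A x)"
    by simp
  also have "\<dots> \<le> measure_pmf.expectation (D T) (\<lambda>x. measure_pmf.expectation (K x) F)"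
  proof (rule integral_mono_AE)
    show "integrable (D T) (\<lambda>x. F x + d * indicator A x)"
    proof (rule integrable_measure_pmf_bounded[where B = "M + d"])
      show "\<bar>F x + d * indicator A x\<bar> \<le> M + d" for x
        using abs_triangle_ineq[of "F x" "d * indicator A x"] F_bounded[of x] ind_bounded[of x]
        by linarith
    qed
    show "integrable (D T) (\<lambda>x. measure_pmf.expectation (K x) F)"
      by (rule integrable_measure_pmf_bounded abs_expectation_pmf_le_bound F_bounded)+
    show "AE x in D T. F x + d * indicator A x \<le> measure_pmf.expectation (K x) F"
      using drift by (simp add: AE_measure_pmf_iff)
  qed
  also have "\<dots> = measure_pmf.expectation (D (Suc T)) F"
    by (simp add: D_Suc expectation_bind_pmf_bounded[OF F_bounded])
  finally show ?case
    using Suc.IH by (simp add: distrib_left)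
qed

lemma prob_bind_pmf_le_absorbing:
  assumes "\<And>x. x \<notin> A \<Longrightarrow> K x = return_pmf x"
  shows "measure_pmf.prob (D \<bind> K) A \<le> measure_pmf.prob D A"
proof -
  have "emeasure (K x) A \<le> indicator A x" for x
    using assms[of x] by (cases "x \<in> A") (auto simp: measure_pmf.emeasure_le_1)
  then have "emeasure (bind_pmf D K) A \<le> emeasure D A"
    by (simp add: nn_integral_mono flip: nn_integral_indicator)
  then show ?thesis
    by (simp add: measure_pmf.emeasure_eq_measure)
qed

lemma decseq_le_half_at_twice_sum_bound:
  fixes f :: "nat \<Rightarrow> real"
  assumes "decseq f" and sum_bound: "\<And>T. (\<Sum>t<T. f t) \<le> K"
  shows "f (nat \<lfloor>2 * K\<rfloor>) \<le> 1 / 2"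
proof -
  define T where "T = nat \<lfloor>2 * K\<rfloor>"
  define n where "n = real (Suc T)"
  have "n * f T = (\<Sum>t<Suc T. f T)"
    by (simp add: n_def)
  also have "\<dots> \<le> (\<Sum>t<Suc T. f t)"
    using \<open>decseq f\<close> by (intro sum_mono) (simp add: decseq_def)
  also have "\<dots> \<le> K"
    by (rule sum_bound)
  finally have "n * f T \<le> K" .
  moreover have "2 * K < n"
    unfolding n_def T_def by linarith
  ultimately have "n * f T \<le> n * (1 / 2)"
    by linarith
  moreover have "0 < n"
    by (simp add: n_def)
  ultimately show ?thesis
    by (simp add: T_def)
qed

lemma suminf_ennreal_le_partial_sum_bound:
  fixes f :: "nat \<Rightarrow> real"
  assumes "\<And>t. 0 \<le> f t" and "\<And>T. (\<Sum>t<T. f t) \<le> K"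
  shows "(\<Sum>t. ennreal (f t)) \<le> ennreal K"
  unfolding suminf_eq_SUP
  by (rule SUP_least) (use assms in \<open>simp add: ennreal_leI sum_ennreal\<close>)

lemma harm_le_two_ln:
  assumes "3 \<le> n"
  shows "harm n \<le> 2 * ln (real n)"
proof -
  obtain m where m: "n = Suc m"
    using assms by (cases n) auto
  have "harm n - ln (real n) \<le> harm 1 - ln 1"
    using decseqD[OF decseq_harm_diff_ln, of 0 m] by (simp add: m)
  moreover have "1 \<le> ln (real n)"
    using exp_le assms by (simp add: ln_ge_iff)
  ultimately show ?thesis
    by (simp add: harm_def)
qed

lemma birth_death_bounds:
  assumes "2 \<le> p" and "1 \<le> x" and "x < r"
  shows "0 \<le> birth p r x" and "birth p r x < 1" and "0 \<le> death p r x"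
    and "birth p r x + death p r x \<le> 1"
proof -
  define P R X where "P = real p" and "R = real r" and "X = real x"
  have P: "2 \<le> P" and X: "1 \<le> X" "X \<le> R - 1"
    using assms by (simp_all add: P_def R_def X_def)
  have b: "birth p r x = (P - 1) / P * (X * (R - X) / (R * (R - 1)))"
    by (simp add: birth_def P_def R_def X_def)
  have d: "death p r x = 1 / P * (X * (X - 1) / (R * (R - 1)))"
    by (simp add: death_def P_def R_def X_def)
  have den: "0 < R * (R - 1)"
    using X by simp
  show "0 \<le> birth p r x" "0 \<le> death p r x"
    unfolding b d using P X den by simp_all
  have "X * (R - X) \<le> (R - 1) * R"
    using X by (intro mult_mono) auto
  then have "X * (R - X) / (R * (R - 1)) \<le> 1"
    using den by (simp add: mult.commute)
  then have "birth p r x \<le> (P - 1) / P"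
    unfolding b using P by (intro mult_left_le) auto
  also have "(P - 1) / P < 1"
    using P by simp
  finally show "birth p r x < 1" .
  have "1 * (X * (X - 1)) \<le> (P - 1) * (X * (X - 1))"
    using P X by (intro mult_right_mono) auto
  then have "(P - 1) * (X * (R - X)) + X * (X - 1) \<le> (P - 1) * (X * (R - X)) + (P - 1) * (X * (X - 1))"
    by simp
  also have "\<dots> = (P - 1) * (X * (R - 1))"
    by (simp add: algebra_simps)
  also have "\<dots> \<le> P * (R * (R - 1))"
    using P X by (intro mult_mono) auto
  finally have "(P - 1) * (X * (R - X)) + X * (X - 1) \<le> P * (R * (R - 1))" .
  moreover have "birth p r x + death p r x
      = ((P - 1) * (X * (R - X)) + X * (X - 1)) / (P * (R * (R - 1)))"
    unfolding b d using P den by (simp add: field_simps add_divide_distrib[symmetric])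
  ultimately show "birth p r x + death p r x \<le> 1"
    using P den by simp
qed

lemma expectation_step_pmf:
  fixes f :: "nat \<Rightarrow> real"
  assumes "2 \<le> p" and "1 \<le> x" and "x < r" and f_bounded: "\<And>y. \<bar>f y\<bar> \<le> M"
  shows "measure_pmf.expectation (step_pmf p r x) f
    = f x + birth p r x * (f (x + 1) - f x) + death p r x * (f (x - 1) - f x)"
proof -
  define b d where "b = birth p r x" and "d = death p r x"
  have bd: "0 \<le> b" "b < 1" "0 \<le> d" "b + d \<le> 1"
    using birth_death_bounds[OF assms(1-3)] by (simp_all add: b_def d_def)
  then have "0 \<le> d / (1 - b)" "d / (1 - b) \<le> 1"
    by (simp_all add: divide_le_eq)
  then have "measure_pmf.expectation (step_pmf p r x) f
      = b * f (x + 1) + (1 - b) * (d / (1 - b) * f (x - 1) + (1 - d / (1 - b)) * f x)"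
    unfolding step_pmf_def b_def[symmetric] d_def[symmetric]
    using bd by (simp add: expectation_bind_pmf_bounded[OF f_bounded])
  also have "\<dots> = b * f (x + 1) + (1 - b) * (d / (1 - b)) * f (x - 1)
      + (1 - b - (1 - b) * (d / (1 - b))) * f x"
    by (simp add: algebra_simps)
  also have "(1 - b) * (d / (1 - b)) = d"
    using bd by simp
  also have "b * f (x + 1) + d * f (x - 1) + (1 - b - d) * f x
      = f x + b * (f (x + 1) - f x) + d * (f (x - 1) - f x)"
    by (simp add: algebra_simps)
  finally show ?thesis
    by (simp add: b_def d_def)
qed

text \<open>Capping at r makes the potential bounded on all of nat, as the drift argument requires.\<close>

definition harm_potential :: "nat \<Rightarrow> nat \<Rightarrow> real" where
  "harm_potential r x = harm (min x r - 1)"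

lemma harm_potential_nonneg: "0 \<le> harm_potential r x"
  by (simp add: harm_potential_def harm_nonneg)

lemma abs_harm_potential_le: "\<bar>harm_potential r x\<bar> \<le> harm r"
  by (simp add: harm_potential_def harm_mono)

lemma harm_potential_Suc_diff:
  assumes "1 \<le> x" and "x < r"
  shows "harm_potential r (x + 1) - harm_potential r x = 1 / real x"
  using assms by (cases x) (auto simp: harm_potential_def harm_Suc min_def divide_inverse)

lemma harm_potential_pred_diff:
  assumes "2 \<le> x" and "x \<le> r"
  shows "harm_potential r (x - 1) - harm_potential r x = - 1 / (real x - 1)"
proof -
  obtain k where "x = Suc (Suc k)"
    using assms(1) by (metis add_2_eq_Suc le_Suc_ex)
  then show ?thesis
    using assms by (auto simp: harm_potential_def harm_Suc min_def divide_inverse)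
qed

lemma harm_potential_drift:
  assumes "2 \<le> p" and "1 \<le> x" and "x < r"
  shows "((real p - 1) * real r - real p * real x) / (real p * real r * (real r - 1))
    \<le> birth p r x * (harm_potential r (x + 1) - harm_potential r x)
      + death p r x * (harm_potential r (x - 1) - harm_potential r x)"
proof -
  define P R X where "P = real p" and "R = real r" and "X = real x"
  have P: "2 \<le> P" and X: "1 \<le> X" "X < R"
    using assms by (simp_all add: P_def R_def X_def)
  have den: "P * R * (R - 1) \<noteq> 0"
    using P X by simp
  have b: "birth p r x = (P - 1) * (X * (R - X)) / (P * R * (R - 1))"
    by (simp add: birth_def P_def R_def X_def)
  have d: "death p r x = X * (X - 1) / (P * R * (R - 1))"
    by (simp add: death_def P_def R_def X_def)
  have "birth p r x * (harm_potential r (x + 1) - harm_potential r x) = birth p r x / X"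
    unfolding harm_potential_Suc_diff[OF assms(2,3)] by (simp add: X_def)
  also have "\<dots> = (P - 1) * (R - X) / (P * R * (R - 1))"
    using X den by (simp add: b field_simps)
  finally have up: "birth p r x * (harm_potential r (x + 1) - harm_potential r x)
      = (P - 1) * (R - X) / (P * R * (R - 1))" .
  have down: "- X / (P * R * (R - 1)) \<le> death p r x * (harm_potential r (x - 1) - harm_potential r x)"
  proof (cases "x = 1")
    case True
    then show ?thesis
      using P X by (simp add: death_def)
  next
    case False
    then have "2 \<le> x" "X - 1 \<noteq> 0"
      using assms(2) by (simp_all add: X_def)
    then have "death p r x * (harm_potential r (x - 1) - harm_potential r x)
        = death p r x * (- 1 / (X - 1))"
      unfolding harm_potential_pred_diff[OF \<open>2 \<le> x\<close> less_imp_le[OF assms(3)]]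
      by (simp add: X_def)
    also have "\<dots> = - X / (P * R * (R - 1))"
      using \<open>X - 1 \<noteq> 0\<close> by (simp add: d)
    finally show ?thesis
      by simp
  qed
  have "((P - 1) * R - P * X) / (P * R * (R - 1))
      = (P - 1) * (R - X) / (P * R * (R - 1)) + - X / (P * R * (R - 1))"
    unfolding add_divide_distrib[symmetric] by (simp add: algebra_simps)
  then show ?thesis
    using up down by (simp add: P_def R_def X_def)
qed

lemma stopped_step_harm_potential_drift:
  assumes "2 \<le> p" and "\<alpha> < (real p - 1) / real p" and "1 \<le> x"
  shows "harm_potential r x
      + (real p - 1 - real p * \<alpha>) / (real p * real r) * indicator {y. real y < \<alpha> * real r} x
    \<le> measure_pmf.expectation (stopped_step p r \<alpha> x) (harm_potential r)"
proof (cases "\<alpha> * real r \<le> real x")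
  case True
  then show ?thesis
    by (simp add: stopped_step_def)
next
  case False
  define P R X c where "P = real p" and "R = real r" and "X = real x" and "c = P - 1 - P * \<alpha>"
  have P: "2 \<le> P" and X: "1 \<le> X" "X < \<alpha> * R"
    using assms False by (simp_all add: P_def R_def X_def)
  have c: "0 < c"
    using assms(2) P by (simp add: c_def P_def field_simps)
  have "(real p - 1) / real p < 1"
    using assms(1) by simp
  then have "\<alpha> * R \<le> 1 * R"
    using assms(2) by (intro mult_right_mono) (simp_all add: R_def)
  then have "x < r"
    using X by (simp add: X_def R_def)
  then have R: "1 < R"
    using X by (simp add: R_def X_def)
  have "c / (P * R) \<le> c / (P * (R - 1))"
    using c P R by (intro divide_left_mono) (auto intro!: mult_pos_pos)
  also have "\<dots> = c * R / (P * R * (R - 1))"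
    using R by simp
  also have "\<dots> \<le> ((P - 1) * R - P * X) / (P * R * (R - 1))"
    using X P \<open>x < r\<close> by (intro divide_right_mono) (auto simp: c_def R_def algebra_simps)
  also have "\<dots> \<le> birth p r x * (harm_potential r (x + 1) - harm_potential r x)
      + death p r x * (harm_potential r (x - 1) - harm_potential r x)"
    using harm_potential_drift[OF assms(1,3) \<open>x < r\<close>] by (simp add: P_def R_def X_def)
  finally show ?thesis
    using False \<open>x < r\<close> assms(1,3)
    by (simp add: stopped_step_def expectation_step_pmf[OF _ _ _ abs_harm_potential_le] c_def P_def R_def)
qed

lemma set_pmf_step_pmf:
  "set_pmf (step_pmf p r x) \<subseteq> {x + 1, x} \<union> (if death p r x = 0 then {} else {x - 1})"
proof -
  have "True \<notin> set_pmf (bernoulli_pmf (death p r x / (1 - birth p r x)))" if "death p r x = 0"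
    using that by (simp add: set_pmf_iff)
  then show ?thesis
    unfolding step_pmf_def set_bind_pmf by (force split: if_splits)
qed

lemma stopped_step_support_pos:
  assumes "1 \<le> x" and "y \<in> set_pmf (stopped_step p r \<alpha> x)"
  shows "1 \<le> y"
proof (cases "\<alpha> * real r \<le> real x")
  case True
  then show ?thesis
    using assms by (simp add: stopped_step_def)
next
  case False
  then have "y \<in> set_pmf (step_pmf p r x)"
    using assms(2) by (simp add: stopped_step_def)
  then have "y \<in> {x + 1, x} \<union> (if death p r x = 0 then {} else {x - 1})"
    using set_pmf_step_pmf by blast
  moreover have "death p r 1 = 0"
    by (simp add: death_def)
  ultimately show ?thesis
    using assms(1) by (cases "x = 1") (auto split: if_splits)
qed

lemma stopped_dist_support_pos:
  assumes "1 \<le> s" and "x \<in> set_pmf (stopped_dist p r \<alpha> s t)"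
  shows "1 \<le> x"
  using assms(2)
proof (induction t arbitrary: x)
  case 0
  then show ?case
    using assms(1) by simp
next
  case (Suc t)
  then obtain y where "y \<in> set_pmf (stopped_dist p r \<alpha> s t)" and "x \<in> set_pmf (stopped_step p r \<alpha> y)"
    by auto
  then show ?case
    using Suc.IH stopped_step_support_pos by blast
qed

lemma tail_prob_sum_le:
  assumes "2 \<le> p" and "\<alpha> < (real p - 1) / real p" and "0 < r" and "1 \<le> s"
  shows "(\<Sum>t<T. tail_prob p r \<alpha> s t) \<le> harm r * (real p * real r) / (real p - 1 - real p * \<alpha>)"
proof -
  define d where "d = (real p - 1 - real p * \<alpha>) / (real p * real r)"
  have c: "0 < real p - 1 - real p * \<alpha>"
    using assms(1,2) by (simp add: field_simps)
  then have "0 < d"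
    unfolding d_def using assms(1,3) by (intro divide_pos_pos) auto
  have "measure_pmf.expectation (stopped_dist p r \<alpha> s 0) (harm_potential r)
      + d * (\<Sum>t<T. tail_prob p r \<alpha> s t)
    \<le> measure_pmf.expectation (stopped_dist p r \<alpha> s T) (harm_potential r)"
    unfolding tail_prob_def d_def
  proof (rule additive_drift[OF _ abs_harm_potential_le stopped_step_harm_potential_drift[OF assms(1,2)]])
    show "1 \<le> x" if "x \<in> set_pmf (stopped_dist p r \<alpha> s t)" for x t
      using stopped_dist_support_pos[OF assms(4) that] .
  qed (use \<open>0 < d\<close> in \<open>simp_all add: d_def\<close>)
  moreover have "measure_pmf.expectation (stopped_dist p r \<alpha> s T) (harm_potential r) \<le> harm r"
    by (rule expectation_pmf_le_bound[OF abs_le_D1[OF abs_harm_potential_le] abs_harm_potential_le])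
  ultimately have "d * (\<Sum>t<T. tail_prob p r \<alpha> s t) \<le> harm r"
    using harm_potential_nonneg[of r s] by simp
  with \<open>0 < d\<close> have "(\<Sum>t<T. tail_prob p r \<alpha> s t) \<le> harm r / d"
    by (metis pos_le_divide_eq mult.commute)
  also have "\<dots> = harm r * (real p * real r) / (real p - 1 - real p * \<alpha>)"
    unfolding d_def by simp
  finally show ?thesis .
qed

lemma decseq_tail_prob: "decseq (tail_prob p r \<alpha> s)"
proof (rule decseq_SucI)
  fix t
  have "stopped_step p r \<alpha> x = return_pmf x" if "x \<notin> {y. real y < \<alpha> * real r}" for x
    using that by (simp add: stopped_step_def)
  then show "tail_prob p r \<alpha> s (Suc t) \<le> tail_prob p r \<alpha> s t"
    unfolding tail_prob_def stopped_dist.simps by (rule prob_bind_pmf_le_absorbing)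
qed

theorem lemma4p7:
  fixes p :: nat and \<alpha> :: real
  assumes "prime p" and "odd p"
    and "0 < \<alpha>" and "\<alpha> < (real p - 1) / real p"
  shows "(\<exists>C::real. \<exists>R0::nat. \<forall>r \<ge> R0. \<forall>s \<in> {1..r}.
            exp_hit p r \<alpha> s \<le> ennreal (C * real r * ln (real r)))
       \<and> (\<exists>B::real. \<exists>R0::nat. \<forall>r \<ge> R0. \<forall>s \<in> {1..r}.
            tail_prob p r \<alpha> s (nat \<lfloor>B * real r * ln (real r)\<rfloor>) \<le> 1 / 2)"
proof -
  have p: "2 \<le> p"
    using assms(1) by (rule prime_ge_2_nat)
  define c where "c = real p - 1 - real p * \<alpha>"
  define C where "C = 2 * real p / c"
  have "0 < c"
    using assms(4) p by (simp add: c_def field_simps)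
  have sum_bound: "(\<Sum>t<T. tail_prob p r \<alpha> s t) \<le> C * real r * ln (real r)"
    if "3 \<le> r" and "s \<in> {1..r}" for r s T
  proof -
    have "(\<Sum>t<T. tail_prob p r \<alpha> s t) \<le> harm r * (real p * real r / c)"
      using tail_prob_sum_le[OF p assms(4)] that by (simp add: c_def)
    also have "\<dots> \<le> 2 * ln (real r) * (real p * real r / c)"
      using harm_le_two_ln[OF that(1)] \<open>0 < c\<close> by (intro mult_right_mono) auto
    also have "\<dots> = C * real r * ln (real r)"
      by (simp add: C_def)
    finally show ?thesis .
  qed
  have "exp_hit p r \<alpha> s \<le> ennreal (C * real r * ln (real r))"
    if "3 \<le> r" and "s \<in> {1..r}" for r s
    unfolding exp_hit_def
    by (rule suminf_ennreal_le_partial_sum_bound[OF _ sum_bound[OF that]]) (simp add: tail_prob_def)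
  moreover have "tail_prob p r \<alpha> s (nat \<lfloor>(2 * C) * real r * ln (real r)\<rfloor>) \<le> 1 / 2"
    if "3 \<le> r" and "s \<in> {1..r}" for r s
    using decseq_le_half_at_twice_sum_bound[OF decseq_tail_prob sum_bound[OF that]]
    by (simp only: mult.assoc)
  ultimately show ?thesis
    by blast
qed

end
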